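(* Let $S$ be a finite inverse semigroup. Then a $\mathscr J$-class $J$ of $S$ is $\mathsf{RM}$-irreducible if and only if all its elements are join irreducible in the natural partial order on $S$. Moreover, for a $\mathscr J$-class $J$ with idempotent $e_J\in J$ and maximal subgroup $G_J$ at $e_J$, we have $M_J=\{g\in G_J\mid \text{for all } f\in S,\ f<e_J\implies f<g\}$.
   Context: In an inverse semigroup every $\mathscr J$-class is regular; $\mathscr J$-classes are ordered by $J'\le J$ iff $S^1J'S^1\subseteq S^1JS^1$. For a $\mathscr J$-class $J$: $s\equiv_{\mathsf{RM},J}t$ iff for all $x\in J$, $xs\in J\iff xt\in J$, and if both lie in $J$ then $xs=xt$. $J$ is $\mathsf{RM}$-irreducible if $\bigcap_{J'<J}\equiv_{\mathsf{RM},J'}\not\subseteq\equiv_{\mathsf{RM},J}$ (the empty intersection is the universal relation). $M_J=\{g\in G_J\mid g\equiv_{\mathsf{RM},J'}e_J\text{ for all } J'<J\}$. The natural partial order is $s\le t$ iff $s=et$ for some idempotent $e$. An element $s$ is join reducible if it is the least upper bound in the natural partial order of some set of elements strictly below it (the least upper bound of the empty set being a minimum element of $S$, if one exists), and join irreducible otherwise. *)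

theory Defs
  imports Main
begin

text \<open>Semigroups are modelled by the type class semigroup_mult; the semigroup S is the
  whole type (UNIV).\<close>

definition inverse_semigroup_ax :: "'a::semigroup_mult itself \<Rightarrow> bool" where
  "inverse_semigroup_ax _ \<longleftrightarrow> (\<forall>s::'a. \<exists>!t. s * t * s = s \<and> t * s * t = t)"

definition idem :: "'a::semigroup_mult \<Rightarrow> bool" where
  "idem e \<longleftrightarrow> e * e = e"

definition ideal1 :: "'a::semigroup_mult \<Rightarrow> 'a set" where
  "ideal1 s = {s} \<union> {x * s | x. True} \<union> {s * y | y. True} \<union> {x * s * y | x y. True}"

definition rideal1 :: "'a::semigroup_mult \<Rightarrow> 'a set" where
  "rideal1 s = {s} \<union> {s * y | y. True}"

definition lideal1 :: "'a::semigroup_mult \<Rightarrow> 'a set" where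
  "lideal1 s = {s} \<union> {x * s | x. True}"

definition ideal1_set :: "'a::semigroup_mult set \<Rightarrow> 'a set" where
  "ideal1_set A = (\<Union>a\<in>A. ideal1 a)"

definition Jclass :: "'a::semigroup_mult \<Rightarrow> 'a set" where
  "Jclass s = {t. ideal1 t = ideal1 s}"

definition is_Jclass :: "'a::semigroup_mult set \<Rightarrow> bool" where
  "is_Jclass J \<longleftrightarrow> (\<exists>s. J = Jclass s)"

definition Jless :: "'a::semigroup_mult set \<Rightarrow> 'a set \<Rightarrow> bool" where
  "Jless J' J \<longleftrightarrow> ideal1_set J' \<subseteq> ideal1_set J \<and> J' \<noteq> J"

definition rm_equiv :: "'a::semigroup_mult set \<Rightarrow> 'a \<Rightarrow> 'a \<Rightarrow> bool" where
  "rm_equiv J s t \<longleftrightarrow> (\<forall>x\<in>J. (x * s \<in> J \<longleftrightarrow> x * t \<in> J) \<and>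
                                 (x * s \<in> J \<and> x * t \<in> J \<longrightarrow> x * s = x * t))"

definition RM_irreducible :: "'a::semigroup_mult set \<Rightarrow> bool" where
  "RM_irreducible J \<longleftrightarrow>
     (\<exists>s t. (\<forall>J'. is_Jclass J' \<and> Jless J' J \<longrightarrow> rm_equiv J' s t) \<and> \<not> rm_equiv J s t)"

definition nat_le :: "'a::semigroup_mult \<Rightarrow> 'a \<Rightarrow> bool" where
  "nat_le s t \<longleftrightarrow> (\<exists>e. idem e \<and> s = e * t)"

definition nat_less :: "'a::semigroup_mult \<Rightarrow> 'a \<Rightarrow> bool" where
  "nat_less s t \<longleftrightarrow> nat_le s t \<and> s \<noteq> t"

definition is_lub :: "'a::semigroup_mult \<Rightarrow> 'a set \<Rightarrow> bool" where
  "is_lub s X \<longleftrightarrow> (\<forall>x\<in>X. nat_le x s) \<and> (\<forall>u. (\<forall>x\<in>X. nat_le x u) \<longrightarrow> nat_le s u)"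

definition join_reducible :: "'a::semigroup_mult \<Rightarrow> bool" where
  "join_reducible s \<longleftrightarrow> (\<exists>X. (\<forall>x\<in>X. nat_less x s) \<and> is_lub s X)"

definition join_irreducible :: "'a::semigroup_mult \<Rightarrow> bool" where
  "join_irreducible s \<longleftrightarrow> \<not> join_reducible s"

text \<open>Maximal subgroup at an idempotent e: its H-class.\<close>
definition Hclass :: "'a::semigroup_mult \<Rightarrow> 'a set" where
  "Hclass e = {g. rideal1 g = rideal1 e \<and> lideal1 g = lideal1 e}"

definition M_J :: "'a::semigroup_mult set \<Rightarrow> 'a \<Rightarrow> 'a set" where
  "M_J J e = {g \<in> Hclass e. \<forall>J'. is_Jclass J' \<and> Jless J' J \<longrightarrow> rm_equiv J' g e}"

end

theory Submission
  imports Defs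
begin

text \<open>In a finite inverse semigroup an element strictly below \<open>u\<close> in the natural order lies in
  a strictly lower \<open>\<J>\<close>-class, and multiplication by suitable elements maps the down-set of an
  element order-isomorphically onto that of any \<open>\<J>\<close>-equivalent one, so join irreducibility is
  a property of whole \<open>\<J>\<close>-classes.
  If an idempotent \<open>e \<in> J\<close> is not the join of the elements below it, some upper bound \<open>w\<close> of
  them has \<open>e \<le> w\<close> false; then \<open>e w\<close> and \<open>e\<close> are separated on \<open>J\<close> at \<open>e\<close>, but agree on every
  lower \<open>\<J>\<close>-class, since there \<open>x e w = x (x\<inverse> x e) w = x e\<close>, the idempotent \<open>x\<inverse> x e\<close> being
  strictly below \<open>e\<close>. Conversely, if \<open>s, t\<close> are separated on \<open>J\<close> at \<open>x\<close> but not on lower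
  \<open>\<J>\<close>-classes, then \<open>u = x\<inverse> x s \<in> J\<close> has \<open>u \<le> s\<close> but not \<open>u \<le> t\<close>, while every \<open>v < u\<close>
  lies in a lower \<open>\<J>\<close>-class, where agreement of \<open>s\<close> and \<open>t\<close> forces \<open>v \<le> t\<close>; so \<open>u\<close> is not a
  join of smaller elements. The description of \<open>M\<^sub>J\<close> is the same computation for \<open>g\<close> in
  the maximal subgroup.\<close>

definition sinv :: "'a::semigroup_mult \<Rightarrow> 'a" where
  "sinv s = (THE t. s * t * s = s \<and> t * s * t = t)"

text \<open>Semigroups have no unit, so \<open>sgpow c n\<close> is the power \<open>c\<^sup>n\<^sup>+\<^sup>1\<close>.\<close>

fun sgpow :: "'a::semigroup_mult \<Rightarrow> nat \<Rightarrow> 'a" where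
  "sgpow c 0 = c"
| "sgpow c (Suc n) = c * sgpow c n"

lemma sgpow_add: "sgpow c m * sgpow c n = sgpow c (Suc (m + n))"
  by (induction m) (simp_all add: mult.assoc)

lemma sgpow_Suc_right: "sgpow c (Suc n) = sgpow c n * c"
  using sgpow_add[of c n 0] by simp

lemma sgpow_periodic:
  assumes ij: "i < j" and eq: "sgpow c i = sgpow c j" and "i \<le> m"
  shows "sgpow c (m + k * (j - i)) = sgpow c m"
proof -
  have shift: "sgpow c (n + (j - i)) = sgpow c n" if "i \<le> n" for n
  proof (cases "n = i")
    case True
    then show ?thesis
      using ij eq by simp
  next
    case False
    then obtain d where n: "n = Suc (d + i)"
      using \<open>i \<le> n\<close> by (metis add.commute le_neq_implies_less less_imp_Suc_add)
    have "n + (j - i) = Suc (d + j)"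
      using n ij by simp
    then have "sgpow c (n + (j - i)) = sgpow c d * sgpow c j" by (simp only: sgpow_add)
    also have "\<dots> = sgpow c d * sgpow c i" by (simp only: eq)
    also have "\<dots> = sgpow c n" by (simp only: n sgpow_add)
    finally show ?thesis .
  qed
  show ?thesis
  proof (induction k)
    case (Suc k)
    have "m + Suc k * (j - i) = (m + k * (j - i)) + (j - i)"
      by simp
    then have "sgpow c (m + Suc k * (j - i)) = sgpow c ((m + k * (j - i)) + (j - i))"
      by (simp only:)
    also have "\<dots> = sgpow c m"
      using shift[of "m + k * (j - i)"] Suc.IH \<open>i \<le> m\<close> by simp
    finally show ?case .
  qed simp
qed

lemma finite_semigroup_idem_sgpow: "\<exists>n. idem (sgpow (c::'a::{finite,semigroup_mult}) n)"
proof -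
  have "\<not> inj (sgpow c)"
    using finite_imageD[of "sgpow c" UNIV] by auto
  then obtain i j where ij: "i < j" "sgpow c i = sgpow c j"
    unfolding inj_def by (metis linorder_neqE_nat)
  define N where "N = (i + 1) * (j - i) - 1"
  have "(i + 1) * 1 \<le> (i + 1) * (j - i)"
    using ij by (intro mult_le_mono2) simp
  then have "i + 1 \<le> (i + 1) * (j - i)" by simp
  then have N: "Suc N = (i + 1) * (j - i)" and "i \<le> N"
    unfolding N_def by linarith+
  have "sgpow c N * sgpow c N = sgpow c (N + (i + 1) * (j - i))"
    by (simp only: sgpow_add N[symmetric] add_Suc_right)
  also have "\<dots> = sgpow c N"
    by (rule sgpow_periodic[OF ij \<open>i \<le> N\<close>])
  finally show ?thesis unfolding idem_def by blast
qed

lemma ideal1_self: "s \<in> ideal1 s"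
  and ideal1_mult_left: "p * s \<in> ideal1 s"
  and ideal1_mult_right: "s * q \<in> ideal1 s"
  and ideal1_mult_both: "p * s * q \<in> ideal1 s"
  for s :: "'a::semigroup_mult"
  unfolding ideal1_def by blast+

locale inverse_semigroup =
  fixes T :: "'a::semigroup_mult itself"
  assumes inverse_semigroup: "inverse_semigroup_ax T"
begin

lemma ex1_inverse: "\<exists>!t. s * t * s = s \<and> t * s * t = (t::'a)"
  using inverse_semigroup unfolding inverse_semigroup_ax_def by blast

lemma mult_sinv_mult: "s * sinv s * s = (s::'a)"
  and sinv_mult_sinv: "sinv s * s * sinv s = (sinv s::'a)"
  using theI'[OF ex1_inverse[of s]] unfolding sinv_def by auto

lemma sinv_eqI: "s * t * s = s \<Longrightarrow> t * s * t = t \<Longrightarrow> sinv s = (t::'a)"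
  unfolding sinv_def by (rule the1_equality[OF ex1_inverse]) auto

lemma sinv_cancel [simp]:
  "s * (sinv s * s) = (s::'a)"
  "s * (sinv s * (s * x)) = s * x"
  "sinv s * (s * sinv s) = sinv s"
  "sinv s * (s * (sinv s * x)) = sinv s * x"
  by (simp_all only: mult.assoc[symmetric] mult_sinv_mult sinv_mult_sinv)

lemma sinv_sinv [simp]: "sinv (sinv s) = (s::'a)"
  by (rule sinv_eqI) (simp_all add: mult_sinv_mult sinv_mult_sinv)

lemma idem_sinv: "idem (e::'a) \<Longrightarrow> sinv e = e"
  unfolding idem_def by (rule sinv_eqI) auto

lemma idem_mult_self: "idem e \<Longrightarrow> e * (e * x) = (e::'a) * x"
  unfolding idem_def by (metis mult.assoc)

lemma idem_mult_sinv: "idem (s * sinv (s::'a))"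
  and idem_sinv_mult: "idem (sinv s * (s::'a))"
  unfolding idem_def by (simp_all add: mult.assoc)

text \<open>For \<open>x = (e f)\<inverse>\<close>, also \<open>f x e\<close> is an inverse of \<open>e f\<close>; uniqueness gives
  \<open>x = f x e\<close>, which makes \<open>x\<close>, and hence \<open>e f = x\<inverse>\<close>, idempotent.\<close>

lemma idem_mult:
  assumes e: "idem (e::'a)" and f: "idem f"
  shows "idem (e * f)"
proof -
  define x where "x = sinv (e * f)"
  have x_inverse: "e * f * x * (e * f) = e * f" "x * (e * f) * x = x"
    unfolding x_def by (rule mult_sinv_mult sinv_mult_sinv)+
  have "sinv (e * f) = f * x * e"
  proof (rule sinv_eqI)
    have "e * f * (f * x * e) * (e * f) = e * f * x * (e * f)"
      by (simp add: mult.assoc idem_mult_self e f)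
    then show "e * f * (f * x * e) * (e * f) = e * f"
      using x_inverse(1) by simp
    have "f * x * e * (e * f) * (f * x * e) = f * (x * (e * f) * x) * e"
      by (simp add: mult.assoc idem_mult_self e f)
    then show "f * x * e * (e * f) * (f * x * e) = f * x * e"
      using x_inverse(2) by simp
  qed
  then have x: "x = f * x * e"
    unfolding x_def by simp
  have "x * x = f * (x * (e * f) * x) * e"
    by (subst (1 2) x) (simp add: mult.assoc)
  also have "\<dots> = x"
    using x x_inverse(2) by (simp add: mult.assoc)
  finally have "idem x"
    unfolding idem_def .
  then have "e * f = x"
    using idem_sinv[of x] unfolding x_def by simp
  with \<open>idem x\<close> show ?thesis
    by simp
qed

lemma idem_commute:
  assumes e: "idem (e::'a)" and f: "idem f"
  shows "e * f = f * e"
proof -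
  have "sinv (e * f) = f * e"
  proof (rule sinv_eqI)
    have "e * f * (f * e) * (e * f) = e * f * (e * f)"
      by (simp add: mult.assoc idem_mult_self e f)
    then show "e * f * (f * e) * (e * f) = e * f"
      using idem_mult[OF e f] unfolding idem_def by simp
    have "f * e * (e * f) * (f * e) = f * e * (f * e)"
      by (simp add: mult.assoc idem_mult_self e f)
    then show "f * e * (e * f) * (f * e) = f * e"
      using idem_mult[OF f e] unfolding idem_def by simp
  qed
  then show ?thesis
    using idem_sinv[OF idem_mult[OF e f]] by simp
qed

lemma idem_commute_assoc: "idem e \<Longrightarrow> idem f \<Longrightarrow> e * (f * x) = f * (e * (x::'a))"
  by (metis idem_commute mult.assoc)

lemma sinv_mult: "sinv (s * t) = sinv t * sinv (s::'a)"
proof (rule sinv_eqI)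
  have "s * t * (sinv t * sinv s) * (s * t) = s * (sinv s * (s * (t * (sinv t * t))))"
    using idem_commute_assoc[OF idem_mult_sinv idem_sinv_mult, of t s t] by (simp add: mult.assoc)
  then show "s * t * (sinv t * sinv s) * (s * t) = s * t"
    by simp
  have "sinv t * sinv s * (s * t) * (sinv t * sinv s)
      = sinv t * (t * (sinv t * (sinv s * (s * sinv s))))"
    using idem_commute_assoc[OF idem_mult_sinv idem_sinv_mult, of t s "sinv s"] by (simp add: mult.assoc)
  then show "sinv t * sinv s * (s * t) * (sinv t * sinv s) = sinv t * sinv s"
    by simp
qed

lemma idem_conjugate:
  assumes g: "idem g"
  shows "idem (c * g * sinv (c::'a))"
proof -
  have "c * g * sinv c * (c * g * sinv c) = c * (sinv c * (c * (g * (g * sinv c))))"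
    using idem_commute_assoc[OF g idem_sinv_mult, of c "g * sinv c"] by (simp add: mult.assoc)
  also have "\<dots> = c * g * sinv c"
    using g by (simp add: idem_mult_self mult.assoc)
  finally show ?thesis
    unfolding idem_def .
qed

lemma nat_le_iff: "nat_le s t \<longleftrightarrow> s = s * sinv s * (t::'a)"
proof
  assume "nat_le s t"
  then obtain g where g: "idem g" "s = g * t"
    unfolding nat_le_def by blast
  have "s * sinv s * t = g * (t * (sinv t * (g * t)))"
    by (simp add: g sinv_mult idem_sinv mult.assoc)
  also have "\<dots> = s"
    using idem_commute_assoc[OF idem_mult_sinv g(1), of t t] g by (simp add: idem_mult_self mult.assoc)
  finally show "s = s * sinv s * t" by simp
next
  assume "s = s * sinv s * t"
  then show "nat_le s t"
    unfolding nat_le_def using idem_mult_sinv by blast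
qed

lemma nat_le_refl: "nat_le s (s::'a)"
  unfolding nat_le_iff by (simp add: mult.assoc)

lemma nat_le_trans: "nat_le s t \<Longrightarrow> nat_le t u \<Longrightarrow> nat_le s (u::'a)"
  unfolding nat_le_def by (metis idem_mult mult.assoc)

lemma nat_le_idem_iff: "idem f \<Longrightarrow> nat_le f w \<longleftrightarrow> f * w = (f::'a)"
  unfolding nat_le_iff by (auto simp: idem_sinv idem_def)

lemma idem_if_nat_le_idem: "nat_le s e \<Longrightarrow> idem e \<Longrightarrow> idem (s::'a)"
  unfolding nat_le_def using idem_mult by blast

lemma nat_le_idem_mult: "idem g \<Longrightarrow> nat_le (g * w) (w::'a)"
  unfolding nat_le_def by blast

lemma nat_le_mult_idem:
  assumes g: "idem g"
  shows "nat_le (w * g) (w::'a)"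
proof -
  have "w * g * sinv w * w = w * g"
    using idem_commute[OF g idem_sinv_mult, of w] by (simp add: mult.assoc)
  then show ?thesis
    unfolding nat_le_def using idem_conjugate[OF g] by metis
qed

lemma nat_le_mult_right: "nat_le s t \<Longrightarrow> nat_le (s * c) (t * (c::'a))"
  unfolding nat_le_def by (metis mult.assoc)

lemma nat_le_mult_left:
  assumes "nat_le s t"
  shows "nat_le (c * s) (c * (t::'a))"
proof -
  obtain g where g: "idem g" "s = g * t"
    using assms unfolding nat_le_def by blast
  have "c * g * sinv c * (c * t) = c * (sinv c * (c * (g * t)))"
    using idem_commute_assoc[OF g(1) idem_sinv_mult, of c t] by (simp add: mult.assoc)
  also have "\<dots> = c * s"
    using g by simp
  finally show ?thesis
    unfolding nat_le_def using idem_conjugate[OF g(1)] by metis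
qed

lemma nat_le_right_absorb: "nat_le x a \<Longrightarrow> x * (sinv a * (a::'a)) = x"
  unfolding nat_le_def by (auto simp: mult.assoc)

lemma nat_le_left_absorb:
  assumes "nat_le x a"
  shows "a * (sinv a * (x::'a)) = x"
proof -
  have x: "x * sinv x * a = x"
    using assms nat_le_iff by metis
  have "a * (sinv a * (x * sinv x * a)) = x * (sinv x * (a * (sinv a * a)))"
    using idem_commute_assoc[OF idem_mult_sinv idem_mult_sinv, of a x a] by (simp add: mult.assoc)
  then show ?thesis
    using x by (simp add: mult.assoc)
qed

lemma nat_le_sinv_mult_eq: "nat_le v s \<Longrightarrow> sinv v * s = sinv v * (v::'a)"
  by (metis nat_le_iff sinv_mult_sinv mult.assoc)

lemma mem_ideal1_iff: "x \<in> ideal1 s \<longleftrightarrow> (\<exists>p q. x = p * (s::'a) * q)"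
proof
  assume "x \<in> ideal1 s"
  moreover have "s = s * sinv s * s * (sinv s * s)"
    and "\<And>y. y * s = y * s * (sinv s * s)"
    and "\<And>y. s * y = s * sinv s * s * y"
    by (simp_all add: mult.assoc)
  ultimately show "\<exists>p q. x = p * s * q"
    unfolding ideal1_def by blast
next
  assume "\<exists>p q. x = p * s * q"
  then show "x \<in> ideal1 s"
    unfolding ideal1_def by blast
qed

lemma ideal1_subset_iff: "ideal1 x \<subseteq> ideal1 y \<longleftrightarrow> x \<in> ideal1 (y::'a)"
proof
  assume "x \<in> ideal1 y"
  then obtain p q where x: "x = p * y * q"
    unfolding mem_ideal1_iff by blast
  show "ideal1 x \<subseteq> ideal1 y"
  proof
    fix z assume "z \<in> ideal1 x"
    then obtain a b where "z = a * x * b"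
      unfolding mem_ideal1_iff by blast
    then have "z = (a * p) * y * (q * b)"
      by (simp add: x mult.assoc)
    then show "z \<in> ideal1 y"
      unfolding mem_ideal1_iff by blast
  qed
qed (use ideal1_self in blast)

lemma ideal1_eq_iff: "ideal1 x = ideal1 y \<longleftrightarrow> x \<in> ideal1 y \<and> y \<in> ideal1 (x::'a)"
  by (auto simp flip: ideal1_subset_iff)

lemma ideal1_mult_sinv: "ideal1 (s * sinv s) = ideal1 (s::'a)"
  unfolding ideal1_eq_iff using ideal1_mult_right[of s] ideal1_mult_right[of "s * sinv s" s]
  by (simp add: mult_sinv_mult)

lemma ideal1_sinv_mult: "ideal1 (sinv s * s) = ideal1 (s::'a)"
  unfolding ideal1_eq_iff using ideal1_mult_left[of _ s] ideal1_mult_left[of s "sinv s * s"]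
  by (simp add: mult.assoc)

lemma ideal1_sinv: "ideal1 (sinv s) = ideal1 (s::'a)"
  unfolding ideal1_eq_iff using ideal1_mult_both[of "sinv s" s "sinv s"] ideal1_mult_both[of s "sinv s" s]
  by (simp add: mult_sinv_mult sinv_mult_sinv)

lemma nat_le_mem_ideal1: "nat_le v u \<Longrightarrow> v \<in> ideal1 (u::'a)"
  unfolding nat_le_def using ideal1_mult_left by blast

lemma mem_Jclass_iff: "x \<in> Jclass s \<longleftrightarrow> ideal1 x = ideal1 s"
  unfolding Jclass_def by simp

lemma is_Jclass_eq: "is_Jclass J \<Longrightarrow> x \<in> J \<Longrightarrow> J = Jclass x"
  unfolding is_Jclass_def Jclass_def by auto

lemma Jless_Jclass_iff: "Jless (Jclass x) (Jclass y) \<longleftrightarrow> ideal1 x \<subset> ideal1 (y::'a)"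
proof -
  have "ideal1_set (Jclass s) = ideal1 s" for s :: 'a
    unfolding ideal1_set_def Jclass_def using ideal1_self by auto
  moreover have "Jclass x = Jclass y \<longleftrightarrow> ideal1 x = ideal1 y"
    unfolding Jclass_def by auto
  ultimately show ?thesis
    unfolding Jless_def by auto
qed

lemma join_reducible_transfer:
  fixes \<phi> \<psi> :: "'a \<Rightarrow> 'a"
  assumes "join_reducible a"
    and mono_\<phi>: "\<And>x y. nat_le x y \<Longrightarrow> nat_le (\<phi> x) (\<phi> y)"
    and mono_\<psi>: "\<And>x y. nat_le x y \<Longrightarrow> nat_le (\<psi> x) (\<psi> y)"
    and retract: "\<And>x. nat_le x a \<Longrightarrow> \<psi> (\<phi> x) = x"
    and deflate: "\<And>w. nat_le (\<phi> (\<psi> w)) w"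
  shows "join_reducible (\<phi> a)"
proof -
  obtain X where below: "\<And>x. x \<in> X \<Longrightarrow> nat_less x a" and lub: "is_lub a X"
    using assms(1) unfolding join_reducible_def by blast
  have "nat_less (\<phi> x) (\<phi> a)" if "x \<in> X" for x
    using below[OF that] retract[of x] retract[OF nat_le_refl] mono_\<phi>
    unfolding nat_less_def by metis
  moreover have "is_lub (\<phi> a) (\<phi> ` X)"
    unfolding is_lub_def
  proof (intro conjI allI impI ballI)
    fix y assume "y \<in> \<phi> ` X"
    then show "nat_le y (\<phi> a)"
      using lub mono_\<phi> unfolding is_lub_def by blast
  next
    fix w assume w: "\<forall>y\<in>\<phi> ` X. nat_le y w"
    have "nat_le x (\<psi> w)" if "x \<in> X" for x
    proof -
      have "nat_le (\<psi> (\<phi> x)) (\<psi> w)"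
        using mono_\<psi> w that by blast
      moreover have "\<psi> (\<phi> x) = x"
        using retract below[OF that] unfolding nat_less_def by blast
      ultimately show ?thesis
        by simp
    qed
    then have "nat_le a (\<psi> w)"
      using lub unfolding is_lub_def by blast
    then show "nat_le (\<phi> a) w"
      using mono_\<phi> deflate[of w] by (blast intro: nat_le_trans)
  qed
  ultimately show ?thesis
    unfolding join_reducible_def by blast
qed

lemma join_reducible_mult_left:
  assumes "join_reducible a" and "a * sinv a = sinv b * (b::'a)"
  shows "join_reducible (b * a)"
proof (rule join_reducible_transfer[OF assms(1), where \<phi> = "\<lambda>x. b * x" and \<psi> = "\<lambda>w. sinv b * w"])
  show "sinv b * (b * x) = x" if "nat_le x a" for x
    using nat_le_left_absorb[OF that] assms(2) by (metis mult.assoc)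
  show "nat_le (b * (sinv b * w)) w" for w
    using nat_le_idem_mult[OF idem_mult_sinv, of b w] by (simp add: mult.assoc)
qed (simp_all add: nat_le_mult_left)

lemma join_reducible_mult_right:
  assumes "join_reducible a" and "sinv a * a = b * sinv (b::'a)"
  shows "join_reducible (a * b)"
proof (rule join_reducible_transfer[OF assms(1), where \<phi> = "\<lambda>x. x * b" and \<psi> = "\<lambda>w. w * sinv b"])
  show "x * b * sinv b = x" if "nat_le x a" for x
    using nat_le_right_absorb[OF that] assms(2) by (simp add: mult.assoc)
  show "nat_le (w * sinv b * b) w" for w
    using nat_le_mult_idem[OF idem_sinv_mult, of w b] by (simp add: mult.assoc)
qed (simp_all add: nat_le_mult_right)

end

locale finite_inverse_semigroup = inverse_semigroup T
  for T :: "'a::{finite,semigroup_mult} itself"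
begin

text \<open>Finiteness enters here: if \<open>v = e u\<close> and \<open>u = p v q\<close>, then \<open>u = (p e)\<^sup>n u q\<^sup>n\<close>,
  and for an idempotent power \<open>g = (p e)\<^sup>n\<close> below \<open>e\<close> this gives \<open>v = e g u = g u = u\<close>.\<close>

lemma nat_le_ideal1_eq:
  assumes "nat_le v u" and "ideal1 v = ideal1 (u::'a)"
  shows "v = u"
proof -
  obtain e where e: "idem e" and v: "v = e * u"
    using assms(1) unfolding nat_le_def by blast
  obtain p q where "u = p * v * q"
    using assms(2) ideal1_self mem_ideal1_iff by blast
  then have cycle: "p * e * u * q = u"
    by (simp add: v mult.assoc)
  have power_cycle: "sgpow (p * e) n * u * sgpow q n = u" for n
  proof (induction n)
    case (Suc n)
    have "sgpow (p * e) (Suc n) * u * sgpow q (Suc n) = sgpow (p * e) n * (p * e * u * q) * sgpow q n"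
      unfolding sgpow_Suc_right[of "p * e"] sgpow.simps(2)[of q] by (simp add: mult.assoc)
    then show ?case
      using Suc.IH by (simp only: cycle)
  qed (use cycle in simp)
  obtain n where "idem (sgpow (p * e) n)"
    using finite_semigroup_idem_sgpow by blast
  define g where "g = sgpow (p * e) n"
  have g: "idem g"
    unfolding g_def by fact
  have "g * e = g"
    using e by (cases n) (simp_all add: g_def sgpow_Suc_right idem_def mult.assoc del: sgpow.simps(2))
  then have eg: "e * g = g"
    using idem_commute[OF e g] by simp
  have gu: "g * u = u"
    using power_cycle[of n] idem_mult_self[OF g] unfolding g_def[symmetric] by (metis mult.assoc)
  show "v = u"
    using v eg gu by (metis mult.assoc)
qed

lemma nat_less_Jless: "nat_less v u \<Longrightarrow> Jless (Jclass v) (Jclass (u::'a))"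
  unfolding nat_less_def Jless_Jclass_iff
  using nat_le_ideal1_eq nat_le_mem_ideal1 ideal1_subset_iff by blast

lemma mult_sinv_eq_idem:
  assumes e: "idem e" and "e * y = y" and "ideal1 y = ideal1 (e::'a)"
  shows "y * sinv y = e"
proof (rule nat_le_ideal1_eq)
  have "y * sinv y * e = e * y * sinv y"
    using idem_commute[OF e idem_mult_sinv] by (simp add: mult.assoc)
  then show "nat_le (y * sinv y) e"
    using nat_le_idem_iff[OF idem_mult_sinv] \<open>e * y = y\<close> by simp
  show "ideal1 (y * sinv y) = ideal1 e"
    using assms(3) ideal1_mult_sinv by simp
qed

lemma sinv_mult_eq_idem:
  assumes f: "idem f" and "y * f = y" and "ideal1 y = ideal1 (f::'a)"
  shows "sinv y * y = f"
proof -
  have "f * sinv y = sinv y"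
    using sinv_mult[of y f] \<open>y * f = y\<close> idem_sinv[OF f] by simp
  then show ?thesis
    using mult_sinv_eq_idem[OF f, of "sinv y"] assms(3) ideal1_sinv by simp
qed

lemma idem_ideal1_eq_D_related:
  assumes e: "idem e" and f: "idem f" and "ideal1 e = ideal1 (f::'a)"
  obtains y where "y * sinv y = e" and "sinv y * y = f"
proof -
  obtain p q where epq: "e = p * f * q"
    using assms(3) ideal1_self mem_ideal1_iff by blast
  define y where "y = e * p * f"
  have "e = y * q"
    using e epq unfolding y_def idem_def by (metis mult.assoc)
  then have "ideal1 y = ideal1 e"
    unfolding ideal1_eq_iff y_def using ideal1_mult_right by (metis mult.assoc)
  moreover have "e * y = y" and "y * f = y"
    using e f unfolding y_def idem_def by (metis mult.assoc)+
  ultimately have "y * sinv y = e" and "sinv y * y = f"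
    using mult_sinv_eq_idem[OF e] sinv_mult_eq_idem[OF f] assms(3) by simp_all
  then show thesis
    by (rule that)
qed

lemma join_reducible_ideal1_eq:
  assumes "join_reducible a" and "ideal1 a = ideal1 (u::'a)"
  shows "join_reducible u"
proof -
  have "ideal1 (u * sinv u) = ideal1 (a * sinv a)"
    using assms(2) ideal1_mult_sinv by simp
  then obtain y where y: "y * sinv y = u * sinv u" "sinv y * y = a * sinv a"
    using idem_ideal1_eq_D_related[OF idem_mult_sinv idem_mult_sinv] by metis
  define c where "c = y * a"
  have "join_reducible c"
    unfolding c_def using join_reducible_mult_left[OF assms(1)] y(2) by simp
  have "c * sinv c = y * (sinv y * y) * sinv y"
    by (simp add: c_def sinv_mult y(2) mult.assoc)
  then have c: "c * sinv c = u * sinv u"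
    using y(1) by (simp add: mult.assoc)
  have "sinv c * u * sinv (sinv c * u) = sinv c * (u * sinv u) * c"
    by (simp add: sinv_mult mult.assoc)
  then have "sinv c * c = sinv c * u * sinv (sinv c * u)"
    by (simp add: c[symmetric] mult.assoc)
  then have "join_reducible (c * (sinv c * u))"
    by (rule join_reducible_mult_right[OF \<open>join_reducible c\<close>])
  moreover have "c * (sinv c * u) = u"
    using c by (simp flip: mult.assoc add: mult_sinv_mult)
  ultimately show ?thesis
    by simp
qed

lemma sinv_mult_mult_idem_nat_less:
  assumes e: "idem e" and J': "is_Jclass J'" "Jless J' (Jclass e)" and x: "x \<in> J'"
  shows "nat_less (sinv x * x * e) (e::'a)"
proof -
  have "ideal1 x \<subset> ideal1 e"
    using J' x is_Jclass_eq Jless_Jclass_iff by metis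
  then have "e \<notin> ideal1 x"
    using ideal1_subset_iff[of e x] by blast
  then have "sinv x * x * e \<noteq> e"
    using ideal1_mult_both[of "sinv x" x e] by auto
  then show ?thesis
    unfolding nat_less_def nat_le_def using idem_sinv_mult by blast
qed

lemma rm_equiv_lower_mult_upper_bound:
  assumes e: "idem e" and w: "\<And>f. nat_less f e \<Longrightarrow> nat_le f w"
    and J': "is_Jclass J'" "Jless J' (Jclass e)"
  shows "rm_equiv J' (e * w) (e::'a)"
proof -
  have "x * (e * w) = x * e" if x: "x \<in> J'" for x
  proof -
    define f where "f = sinv x * x * e"
    have "nat_le f w"
      unfolding f_def using w sinv_mult_mult_idem_nat_less[OF e J' x] .
    then have "f * w = f"
      using nat_le_idem_iff idem_mult[OF idem_sinv_mult e] unfolding f_def by blast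
    then have "x * (f * w) = x * f"
      by simp
    then show ?thesis
      unfolding f_def by (simp add: mult.assoc)
  qed
  then show ?thesis
    unfolding rm_equiv_def by simp
qed

lemma Hclass_idemD:
  assumes e: "idem e" and "g \<in> Hclass e"
  shows "e * g = g" and "ideal1 g = ideal1 (e::'a)"
proof -
  have "rideal1 g = rideal1 e"
    using assms(2) unfolding Hclass_def by simp
  then have "g \<in> rideal1 e" and "e \<in> rideal1 g"
    unfolding rideal1_def by blast+
  then obtain y z where g: "g = e \<or> g = e * y" and "e = g \<or> e = g * z"
    unfolding rideal1_def by blast
  then show "ideal1 g = ideal1 e"
    unfolding ideal1_eq_iff using ideal1_self ideal1_mult_right by metis
  show "e * g = g"
    using g e unfolding idem_def by (auto simp flip: mult.assoc)
qed

lemma M_J_eq: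
  assumes J: "is_Jclass J" and "e \<in> J" and e: "idem (e::'a)"
  shows "M_J J e = {g \<in> Hclass e. \<forall>f. nat_less f e \<longrightarrow> nat_less f g}"
proof -
  have Je: "J = Jclass e"
    using J \<open>e \<in> J\<close> by (rule is_Jclass_eq)
  show ?thesis
  proof (intro set_eqI iffI)
    fix g
    assume "g \<in> M_J J e"
    then have gH: "g \<in> Hclass e" and rm: "\<And>J'. is_Jclass J' \<Longrightarrow> Jless J' J \<Longrightarrow> rm_equiv J' g e"
      unfolding M_J_def by auto
    have "nat_less f g" if f: "nat_less f e" for f
    proof -
      have "idem f" and "f * e = f"
        using f e idem_if_nat_le_idem nat_le_idem_iff unfolding nat_less_def by blast+
      moreover have "rm_equiv (Jclass f) g e"
        using rm nat_less_Jless[OF f] Je unfolding is_Jclass_def by blast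
      moreover have "f \<in> Jclass f"
        by (simp add: mem_Jclass_iff)
      ultimately have "f * g = f"
        unfolding rm_equiv_def by auto
      then have "nat_le f g"
        using nat_le_idem_iff \<open>idem f\<close> by blast
      moreover have "ideal1 f \<noteq> ideal1 g"
        using nat_less_Jless[OF f] Hclass_idemD[OF e gH] Jless_Jclass_iff by auto
      ultimately show ?thesis
        unfolding nat_less_def by blast
    qed
    with gH show "g \<in> {g \<in> Hclass e. \<forall>f. nat_less f e \<longrightarrow> nat_less f g}"
      by blast
  next
    fix g
    assume "g \<in> {g \<in> Hclass e. \<forall>f. nat_less f e \<longrightarrow> nat_less f g}"
    then have gH: "g \<in> Hclass e" and below: "\<And>f. nat_less f e \<Longrightarrow> nat_le f g"
      unfolding nat_less_def by auto
    have "rm_equiv J' g e" if "is_Jclass J'" "Jless J' J" for J'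
      using rm_equiv_lower_mult_upper_bound[OF e below that[unfolded Je]] Hclass_idemD[OF e gH]
      by simp
    with gH show "g \<in> M_J J e"
      unfolding M_J_def by blast
  qed
qed

lemma RM_irreducible_if_join_irreducible:
  assumes J: "is_Jclass J" and irreducible: "\<forall>s\<in>J. join_irreducible (s::'a)"
  shows "RM_irreducible J"
proof -
  obtain s where "J = Jclass s"
    using J unfolding is_Jclass_def by blast
  define e where "e = s * sinv s"
  have e: "idem e" and "e \<in> J"
    unfolding e_def \<open>J = Jclass s\<close> mem_Jclass_iff by (rule idem_mult_sinv ideal1_mult_sinv)+
  then have Je: "J = Jclass e"
    using J is_Jclass_eq by blast
  have "\<not> is_lub e {f. nat_less f e}"
  proof
    assume "is_lub e {f. nat_less f e}"
    then have "join_reducible e"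
      unfolding join_reducible_def by (intro exI[of _ "{f. nat_less f e}"]) simp
    then show False
      using irreducible \<open>e \<in> J\<close> unfolding join_irreducible_def by blast
  qed
  then obtain w where w: "\<And>f. nat_less f e \<Longrightarrow> nat_le f w" and "\<not> nat_le e w"
    unfolding is_lub_def nat_less_def by auto
  have "rm_equiv J' (e * w) e" if "is_Jclass J'" "Jless J' J" for J'
    using rm_equiv_lower_mult_upper_bound[OF e w] that Je by blast
  moreover have "\<not> rm_equiv J (e * w) e"
  proof
    assume "rm_equiv J (e * w) e"
    then have "e * (e * w) = e * e"
      using \<open>e \<in> J\<close> e unfolding rm_equiv_def idem_def by metis
    then have "e * w = e"
      using e idem_mult_self unfolding idem_def by metis
    then show False
      using \<open>\<not> nat_le e w\<close> nat_le_idem_iff[OF e] by blast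
  qed
  ultimately show ?thesis
    unfolding RM_irreducible_def by blast
qed

lemma sinv_mult_mult_separates:
  assumes xs: "ideal1 (x * s) = ideal1 x" and "x * t \<noteq> x * (s::'a)"
  defines "u \<equiv> sinv x * x * s"
  shows "ideal1 u = ideal1 x" and "nat_le u s" and "\<not> nat_le u t"
proof -
  have "ideal1 u = ideal1 (x * s)"
    unfolding ideal1_eq_iff u_def
    using ideal1_mult_left[of "sinv x" "x * s"] ideal1_mult_left[of x "sinv x * x * s"]
    by (simp add: mult.assoc)
  then show "ideal1 u = ideal1 x"
    using xs by simp
  moreover have "sinv x * x * u = u"
    unfolding u_def by (simp add: mult.assoc)
  ultimately have "u * sinv u = sinv x * x"
    using mult_sinv_eq_idem[OF idem_sinv_mult] ideal1_sinv_mult by simp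
  show "nat_le u s"
    unfolding u_def nat_le_def using idem_sinv_mult by blast
  show "\<not> nat_le u t"
  proof
    assume "nat_le u t"
    then have "u = sinv x * x * t"
      using nat_le_iff \<open>u * sinv u = sinv x * x\<close> by metis
    then have "x * t = x * s"
      unfolding u_def by (metis mult.assoc sinv_cancel(2))
    with assms(2) show False
      by contradiction
  qed
qed

lemma join_irreducible_if_lower_rm_equiv:
  assumes up: "nat_le u p" and uq: "\<not> nat_le u q"
    and lower: "\<And>J'. is_Jclass J' \<Longrightarrow> Jless J' (Jclass u) \<Longrightarrow> rm_equiv J' p (q::'a)"
  shows "join_irreducible u"
  unfolding join_irreducible_def
proof
  assume "join_reducible u"
  then obtain X where below: "\<And>v. v \<in> X \<Longrightarrow> nat_less v u" and lub: "is_lub u X"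
    unfolding join_reducible_def by blast
  have "nat_le v q" if "v \<in> X" for v
  proof -
    have "rm_equiv (Jclass v) p q"
      using lower nat_less_Jless[OF below[OF that]] unfolding is_Jclass_def by blast
    moreover have vp: "nat_le v p"
      using nat_le_trans below[OF that] up unfolding nat_less_def by blast
    moreover have "sinv v \<in> Jclass v" and "sinv v * p \<in> Jclass v"
      unfolding mem_Jclass_iff nat_le_sinv_mult_eq[OF vp] by (rule ideal1_sinv ideal1_sinv_mult)+
    ultimately have "sinv v * q = sinv v * v"
      using nat_le_sinv_mult_eq[OF vp] unfolding rm_equiv_def by auto
    then have "v = v * sinv v * q"
      by (simp add: mult.assoc)
    then show ?thesis
      unfolding nat_le_iff .
  qed
  then have "nat_le u q"
    using lub unfolding is_lub_def by blast
  with uq show False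
    by contradiction
qed

lemma join_irreducible_if_RM_irreducible:
  assumes J: "is_Jclass J" and "RM_irreducible J" and "a \<in> J"
  shows "join_irreducible (a::'a)"
proof -
  obtain s t where lower: "\<And>J'. is_Jclass J' \<Longrightarrow> Jless J' J \<Longrightarrow> rm_equiv J' s t"
    and "\<not> rm_equiv J s t"
    using assms(2) unfolding RM_irreducible_def by blast
  obtain x where "x \<in> J"
    and "\<not> ((x * s \<in> J \<longleftrightarrow> x * t \<in> J) \<and> (x * s \<in> J \<and> x * t \<in> J \<longrightarrow> x * s = x * t))"
    using \<open>\<not> rm_equiv J s t\<close> unfolding rm_equiv_def by blast
  then consider "x * s \<in> J" "x * t \<noteq> x * s" | "x * t \<in> J" "x * s \<noteq> x * t"
    by (cases "x * s \<in> J"; metis)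
  then obtain p q where "x * p \<in> J" "x * q \<noteq> x * p"
    and lower': "\<And>J'. is_Jclass J' \<Longrightarrow> Jless J' J \<Longrightarrow> rm_equiv J' p q"
  proof cases
    case 1
    then show ?thesis
      using that lower by blast
  next
    case 2
    moreover have "rm_equiv J' t s" if "is_Jclass J'" "Jless J' J" for J'
      using lower[OF that] unfolding rm_equiv_def by metis
    ultimately show ?thesis
      using that by blast
  qed
  define u where "u = sinv x * x * p"
  have "J = Jclass x"
    using J \<open>x \<in> J\<close> by (rule is_Jclass_eq)
  then have "ideal1 (x * p) = ideal1 x"
    using \<open>x * p \<in> J\<close> mem_Jclass_iff by blast
  note separates = sinv_mult_mult_separates[OF this \<open>x * q \<noteq> x * p\<close>, folded u_def]
  have "Jclass u = J"
    using separates(1) \<open>J = Jclass x\<close> unfolding Jclass_def by simp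
  then have "join_irreducible u"
    using join_irreducible_if_lower_rm_equiv[OF separates(2,3)] lower' by blast
  moreover have "ideal1 a = ideal1 u"
    using \<open>a \<in> J\<close> \<open>Jclass u = J\<close> mem_Jclass_iff by blast
  ultimately show ?thesis
    using join_reducible_ideal1_eq unfolding join_irreducible_def by blast
qed

end

theorem proposition2p12:
  assumes "inverse_semigroup_ax TYPE('a::{finite,semigroup_mult})"
  shows "(\<forall>J::'a set. is_Jclass J \<longrightarrow>
            (RM_irreducible J \<longleftrightarrow> (\<forall>s\<in>J. join_irreducible s)))
       \<and> (\<forall>(J::'a set) e. is_Jclass J \<and> e \<in> J \<and> idem e \<longrightarrow>
            M_J J e = {g \<in> Hclass e. \<forall>f. nat_less f e \<longrightarrow> nat_less f g})"
proof -
  interpret finite_inverse_semigroup "TYPE('a)"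
    by unfold_locales (rule assms)
  show ?thesis
    using RM_irreducible_if_join_irreducible join_irreducible_if_RM_irreducible M_J_eq by blast
qed

end
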